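(* Let $k \geq 2$ be an integer. Let $\mathbb{R}^2_+=\{(x,y): y>0\}$ and $\mathbb{R}^2_-=\{(x,y): y<0\}$. Fix a $(k+1)$-element set $K=\{y_1,\ldots,y_{k+1}\} \subset \mathbb{R}^2_-$. Let $U$ be the family of all $k$-element subsets of $\mathbb{R}^2_-$, let $O$ be the initial ordinal of cardinality $\mathfrak{c}=2^{\aleph_0}$ (so $|O|=\mathfrak{c}$ and $|\{\alpha \in O: \alpha<\lambda\}|<\mathfrak{c}$ for every $\lambda\in O$), and let $\lambda \mapsto a^{\lambda}=\{a^{\lambda}_1,\ldots,a^{\lambda}_k\}$ be a bijection from $O$ onto $U$. Then there exist families of sets $\{A_\lambda\}_{\lambda\in O}$ and $\{B_\lambda\}_{\lambda \in O}$, increasing in the sense that $\lambda_1<\lambda_2$ implies $A_{\lambda_1}\subseteq A_{\lambda_2}$ and $B_{\lambda_1}\subseteq B_{\lambda_2}$, such that for every $\lambda \in O$: (1) $A_\lambda, B_\lambda \subset \{(x,0): x \in \mathbb{R}\}$; (2) $A_\lambda \cap B_\lambda=\emptyset$; (3) $|A_\lambda|,|B_\lambda| \leq \max(|\lambda|,\aleph_0) < \mathfrak{c}$; (4) there is a point $z \in \mathbb{R}^2_+$ that sees every point of $a^\lambda$ via $A_\lambda$, while no point $z\in\mathbb{R}^2_+$ sees all points of $K$ via $A_\lambda$.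
   Context: For $z \in \mathbb{R}^2_+$, $y \in \mathbb{R}^2_-$ and a subset $A$ of the $x$-axis, "$z$ sees $y$ via $A$" means that the segment $[z,y]$ is contained in $\mathbb{R}^2_+ \cup A \cup \mathbb{R}^2_-$ (equivalently, the intersection point of $[z,y]$ with the $x$-axis lies in $A$). For an ordinal $\lambda$, $|\lambda|$ denotes its cardinality (the cardinality of the set of ordinals smaller than $\lambda$). The axiom of choice is assumed. *)

theory Defs
  imports "HOL-Analysis.Analysis"
begin

definition upper_half :: "(real \<times> real) set" where
  "upper_half = {p. snd p > 0}"

definition lower_half :: "(real \<times> real) set" where
  "lower_half = {p. snd p < 0}"

definition x_axis :: "(real \<times> real) set" where
  "x_axis = {p. snd p = 0}"

definition sees_via :: "real \<times> real \<Rightarrow> real \<times> real \<Rightarrow> (real \<times> real) set \<Rightarrow> bool" where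
  "sees_via z y A \<longleftrightarrow> closed_segment z y \<subseteq> upper_half \<union> A \<union> lower_half"

end

theory Submission
  imports Defs
begin

text \<open>For \<open>z\<close> in the upper and \<open>y\<close> in the lower half-plane, \<open>z\<close> sees \<open>y\<close> via a set of axis
  points exactly when it contains the point \<open>(crossing z y, 0)\<close> where the segment meets the axis.
  So it suffices to build, by transfinite recursion along \<open>r\<close>, increasing sets \<open>X\<^sub>\<lambda>\<close> of
  reals that contain \<open>crossing z ` a\<^sup>\<lambda>\<close> for some \<open>z\<close> and never contain \<open>crossing z ` K\<close>.
  Fewer than continuum many reals are placed before stage \<open>\<lambda>\<close>, and the viewpoint \<open>z\<close> for
  \<open>a\<^sup>\<lambda>\<close> is chosen generically: its \<open>k\<close> new crossings avoid the fewer than continuum many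
  values that would complete a view of \<open>K\<close> from a point already fixed by two old crossings,
  and no \<open>z'\<close> may see one point of \<open>K\<close> through an old crossing and two others through new
  ones, a condition expressed by non-vanishing determinants that are polynomial in \<open>z\<close>.
  Keeping away from the finitely many axis points on lines through two points of \<open>K\<close> makes
  \<open>crossing z'\<close> injective on \<open>K\<close>, and since \<open>k < card K\<close> every other way of seeing \<open>K\<close>
  is excluded by counting. Limit stages are harmless because a view of \<open>K\<close> uses only
  finitely many points.\<close>

section \<open>Crossing points on the axis\<close>

definition crossing :: "real \<times> real \<Rightarrow> real \<times> real \<Rightarrow> real" where
  "crossing z y = (snd z * fst y - fst z * snd y) / (snd z - snd y)"

lemma closed_segment_inter_x_axis:
  assumes "snd z > 0" "snd y < 0"
  shows "closed_segment z y \<inter> x_axis = {(crossing z y, 0)}"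
proof -
  define u where "u = snd z / (snd z - snd y)"
  have d: "snd z - snd y > 0" using assms by simp
  have "(1 - u) * fst z + u * fst y = crossing z y" "(1 - u) * snd z + u * snd y = 0"
    using d by (simp_all add: u_def crossing_def divide_simps)
  then have point: "(1 - u) *\<^sub>R z + u *\<^sub>R y = (crossing z y, 0)"
    by (simp add: prod_eq_iff)
  have u01: "0 \<le> u" "u \<le> 1" using assms d by (auto simp: u_def field_simps)
  show ?thesis
  proof
    show "closed_segment z y \<inter> x_axis \<subseteq> {(crossing z y, 0)}"
    proof
      fix p assume "p \<in> closed_segment z y \<inter> x_axis"
      then obtain v where p: "p = (1 - v) *\<^sub>R z + v *\<^sub>R y" and "snd p = 0"
        unfolding closed_segment_def x_axis_def by blast
      then have "(1 - v) * snd z + v * snd y = 0" by simp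
      then have "v = u" using d by (simp add: u_def field_simps)
      then show "p \<in> {(crossing z y, 0)}" using p point by simp
    qed
    show "{(crossing z y, 0)} \<subseteq> closed_segment z y \<inter> x_axis"
      using u01 point unfolding closed_segment_def x_axis_def by force
  qed
qed

lemma sees_via_iff_crossing:
  assumes "snd z > 0" "snd y < 0"
  shows "sees_via z y A \<longleftrightarrow> (crossing z y, 0) \<in> A"
proof -
  have "upper_half \<union> lower_half = - x_axis"
    unfolding upper_half_def lower_half_def x_axis_def by auto
  then have "sees_via z y A \<longleftrightarrow> closed_segment z y \<inter> x_axis \<subseteq> A"
    unfolding sees_via_def by auto
  then show ?thesis using closed_segment_inter_x_axis[OF assms] by simp
qed

lemma sees_via_axis_image_iff:
  assumes "snd z > 0" "Y \<subseteq> lower_half"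
  shows "(\<forall>y\<in>Y. sees_via z y ((\<lambda>x. (x, 0)) ` X)) \<longleftrightarrow> crossing z ` Y \<subseteq> X"
proof -
  have "sees_via z y ((\<lambda>x. (x, 0)) ` X) \<longleftrightarrow> crossing z y \<in> X" if "y \<in> Y" for y
  proof -
    have "snd y < 0" using that assms(2) by (auto simp: lower_half_def)
    then show ?thesis using sees_via_iff_crossing[OF assms(1)] by auto
  qed
  then show ?thesis by blast
qed

fun line_eval :: "real \<times> real \<times> real \<Rightarrow> real \<times> real \<Rightarrow> real" where
  "line_eval (a, b, c) (x, y) = a * x + b * y + c"

text \<open>Coefficients of the line through \<open>y\<close> and the axis point \<open>(n / d, 0)\<close>; keeping the
  axis point in homogeneous coordinates \<open>(n : d)\<close> makes them polynomial in \<open>n\<close> and \<open>d\<close>.\<close>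
definition line_via :: "real \<times> real \<Rightarrow> real \<Rightarrow> real \<Rightarrow> real \<times> real \<times> real" where
  "line_via y n d = (snd y * d, n - fst y * d, - snd y * n)"

lemma crossing_eq_frac_iff:
  assumes "snd z \<noteq> snd y" "d \<noteq> 0"
  shows "crossing z y = n / d \<longleftrightarrow> line_eval (line_via y n d) z = 0"
proof -
  obtain z1 z2 y1 y2 where "z = (z1, z2)" "y = (y1, y2)" by fastforce
  with assms show ?thesis
    by (simp add: crossing_def line_via_def divide_simps) (auto simp: algebra_simps)
qed

lemma crossing_eq_iff:
  assumes "snd z \<noteq> snd y"
  shows "crossing z y = v \<longleftrightarrow> line_eval (line_via y v 1) z = 0"
  using crossing_eq_frac_iff[OF assms, of 1 v] by simp

lemma crossing_coincidence:
  assumes "snd z > 0" "snd y1 < 0" "snd y2 < 0" "y1 \<noteq> y2" "crossing z y1 = crossing z y2"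
  shows "crossing z y1 = (fst y1 * snd y2 - fst y2 * snd y1) / (snd y2 - snd y1)"
proof -
  define c where "c = crossing z y1"
  have "line_eval (line_via y1 c 1) z = 0" "line_eval (line_via y2 c 1) z = 0"
    using assms crossing_eq_iff[of z y1 c] crossing_eq_iff[of z y2 c] by (simp_all add: c_def)
  then have "snd y2 * line_eval (line_via y1 c 1) z - snd y1 * line_eval (line_via y2 c 1) z = 0"
    by simp
  then have "snd z * ((c - fst y1) * snd y2 - (c - fst y2) * snd y1) = 0"
    by (cases z) (simp add: line_via_def algebra_simps)
  then have "(c - fst y1) * snd y2 - (c - fst y2) * snd y1 = 0"
    using assms(1) by simp
  then have c: "c * (snd y2 - snd y1) = fst y1 * snd y2 - fst y2 * snd y1"
    by (simp add: algebra_simps)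
  have "snd y2 \<noteq> snd y1"
  proof
    assume "snd y2 = snd y1"
    with c assms(2) have "fst y1 = fst y2" by simp
    with \<open>snd y2 = snd y1\<close> assms(4) show False by (simp add: prod_eq_iff)
  qed
  with c show ?thesis by (simp add: c_def field_simps)
qed

lemma crossings_determine_viewpoint:
  assumes "snd z > 0" "snd w > 0" "snd y1 < 0" "snd y2 < 0"
    and "crossing w y1 = crossing z y1" "crossing w y2 = crossing z y2"
    and "crossing z y1 \<noteq> crossing z y2"
  shows "w = z"
proof -
  define v1 v2 where "v1 = crossing z y1" and "v2 = crossing z y2"
  define L1 L2 where "L1 = line_eval (line_via y1 v1 1)" and "L2 = line_eval (line_via y2 v2 1)"
  have lines: "L1 p = 0" "L2 p = 0" if "p \<in> {z, w}" for p
    using that assms crossing_eq_iff[of p y1 v1] crossing_eq_iff[of p y2 v2]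
    by (auto simp: v1_def v2_def L1_def L2_def)
  define D where "D = snd y1 * (v2 - fst y2) - snd y2 * (v1 - fst y1)"
  have "snd y1 * L2 z - snd y2 * L1 z = 0" using lines by simp
  then have "D * snd z = snd y1 * snd y2 * (v2 - v1)"
    by (cases z) (simp add: L1_def L2_def D_def line_via_def algebra_simps)
  then have "D \<noteq> 0" using assms by (auto simp: v1_def v2_def)
  moreover have "(v2 - fst y2) * (L1 z - L1 w) - (v1 - fst y1) * (L2 z - L2 w) = 0"
    "snd y1 * (L2 z - L2 w) - snd y2 * (L1 z - L1 w) = 0"
    using lines by simp_all
  then have "D * (fst z - fst w) = 0" "D * (snd z - snd w) = 0"
    by (cases z, cases w, simp add: L1_def L2_def D_def line_via_def algebra_simps)+
  ultimately show ?thesis by (simp add: prod_eq_iff)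
qed

section \<open>Sets of size below the continuum\<close>

unbundle cardinal_syntax

lemma card_of_finite_ordLess_infinite: "finite A \<Longrightarrow> infinite B \<Longrightarrow> |A| <o |B|"
  by (rule finite_ordLess_infinite) (auto simp: card_of_Well_order card_of_well_order_on Field_card_of)

definition small :: "'a set \<Rightarrow> bool" where
  "small A \<longleftrightarrow> |A| <o |UNIV :: real set|"

lemma small_ordLeq: "|A| \<le>o |B| \<Longrightarrow> small B \<Longrightarrow> small A"
  unfolding small_def using ordLeq_ordLess_trans by blast

lemma small_subset: "A \<subseteq> B \<Longrightarrow> small B \<Longrightarrow> small A"
  using small_ordLeq card_of_mono1 by blast

lemma small_image: "small A \<Longrightarrow> small (f ` A)"
  using small_ordLeq card_of_image by blast

lemma small_finite: "finite A \<Longrightarrow> small A"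
  unfolding small_def by (simp add: card_of_finite_ordLess_infinite infinite_UNIV_char_0)

lemma small_countable:
  assumes "|A| \<le>o |UNIV :: nat set|"
  shows "small A"
proof -
  have "\<not> |UNIV :: real set| \<le>o |UNIV :: nat set|"
  proof
    assume "|UNIV :: real set| \<le>o |UNIV :: nat set|"
    then obtain f :: "real \<Rightarrow> nat" where "inj f"
      unfolding card_of_ordLeq[symmetric] by blast
    then show False using uncountable_UNIV_real countableI by blast
  qed
  then have "small (UNIV :: nat set)"
    unfolding small_def by (simp add: not_ordLeq_iff_ordLess[OF card_of_Well_order card_of_Well_order])
  with assms show ?thesis by (rule small_ordLeq)
qed

lemma small_Un: "small A \<Longrightarrow> small B \<Longrightarrow> small (A \<union> B)"
  unfolding small_def by (rule card_of_Un_ordLess_infinite) (auto simp: infinite_UNIV_char_0)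

lemma small_Times_self: "small C \<Longrightarrow> small (C \<times> C)"
  by (cases "finite C")
    (auto simp: small_finite intro: small_ordLeq[OF ordIso_imp_ordLeq[OF card_of_Times_same_infinite]])

lemma small_Times:
  assumes "small A" "small B"
  shows "small (A \<times> B)"
proof -
  let ?C = "Inl ` A \<union> Inr ` B"
  have "|A \<times> B| \<le>o |?C \<times> ?C|"
    unfolding card_of_ordLeq[symmetric]
    by (intro exI[of _ "\<lambda>(a, b). (Inl a, Inr b)"]) (auto simp: inj_on_def)
  moreover have "small (?C \<times> ?C)" using assms by (intro small_Times_self small_Un small_image)
  ultimately show ?thesis by (rule small_ordLeq)
qed

lemma small_UN_finite:
  assumes "small I" "\<And>i. i \<in> I \<Longrightarrow> finite (F i)"
  shows "small (\<Union>i\<in>I. F i)"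
proof (cases "finite I")
  case False
  have "\<forall>i\<in>I. |F i| \<le>o |I|"
    using False assms(2) by (simp add: ordLess_imp_ordLeq card_of_finite_ordLess_infinite)
  then have "|\<Union>i\<in>I. F i| \<le>o |I|"
    using card_of_UNION_ordLeq_infinite[OF False] card_of_refl ordIso_imp_ordLeq by blast
  with assms(1) show ?thesis by (simp add: small_ordLeq)
qed (use assms in \<open>simp add: small_finite\<close>)

lemma small_ex_pos_notin:
  assumes "small (A :: real set)"
  shows "\<exists>x>0. x \<notin> A"
proof -
  have "ln ` A \<noteq> UNIV"
    using small_image[OF assms, of ln] ordLess_irreflexive unfolding small_def by force
  then obtain y where "y \<notin> ln ` A" by blast
  then have "exp y \<notin> A" by (metis image_eqI ln_exp)
  then show ?thesis by (intro exI[of _ "exp y"]) simp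
qed

section \<open>Common non-zeros of polynomial families\<close>

lemma real_polynomial_function_finite_zeros:
  fixes f :: "real \<Rightarrow> real"
  assumes "real_polynomial_function f" "f x \<noteq> 0"
  shows "finite {x. f x = 0}"
proof -
  obtain c n where f: "f = (\<lambda>x. \<Sum>i\<le>n. c i * x ^ i)"
    using assms(1) real_polynomial_function_iff_sum by blast
  then have "\<exists>k\<le>n. c k \<noteq> 0" using assms(2) polyfun_eq_0[of c n] by auto
  then show ?thesis unfolding f by (rule polyfun_rootbound_finite)
qed

lemma real_polynomial_function_fst: "real_polynomial_function fst"
  and real_polynomial_function_snd: "real_polynomial_function snd"
  by (simp_all add: real_polynomial_function.intros(1) bounded_linear_fst bounded_linear_snd)

lemma real_polynomial_function_line_eval: "real_polynomial_function (line_eval l)"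
proof -
  obtain a b c where l: "l = (a, b, c)" by (metis prod.collapse)
  have "real_polynomial_function (\<lambda>p. a * fst p + b * snd p + c)"
    by (intro real_polynomial_function.intros(2-4) real_polynomial_function_fst
        real_polynomial_function_snd)
  moreover have "line_eval l = (\<lambda>p. a * fst p + b * snd p + c)" by (auto simp: l)
  ultimately show ?thesis by simp
qed

lemma real_polynomial_function_sections:
  fixes F :: "real \<times> real \<Rightarrow> real"
  assumes "real_polynomial_function F"
  shows "real_polynomial_function (\<lambda>t. F (t, h))" "real_polynomial_function (\<lambda>h. F (t, h))"
proof -
  have "polynomial_function (\<lambda>t :: real. (t, 0) + (0, h))"
    "polynomial_function (\<lambda>h :: real. (0, h) + (t, 0))"
    by (intro polynomial_function_add polynomial_function_bounded_linear bounded_linear_Pair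
        bounded_linear_ident bounded_linear_zero polynomial_function_const)+
  from this[THEN real_polynomial_function_compose, OF assms]
  show "real_polynomial_function (\<lambda>t. F (t, h))" "real_polynomial_function (\<lambda>h. F (t, h))"
    by (simp_all add: o_def)
qed

lemma ex_upper_common_nonzero:
  fixes \<F> :: "(real \<times> real \<Rightarrow> real) set"
  assumes "small \<F>"
    and poly: "\<And>F. F \<in> \<F> \<Longrightarrow> real_polynomial_function F"
    and nonzero: "\<And>F. F \<in> \<F> \<Longrightarrow> \<exists>z. F z \<noteq> 0"
  shows "\<exists>z. snd z > 0 \<and> (\<forall>F\<in>\<F>. F z \<noteq> 0)"
proof -
  txt \<open>Choose the height \<open>h\<close> first, avoiding the (finitely many, for each \<open>F\<close>) zeros of
    \<open>F\<close> on the vertical line through a non-zero of \<open>F\<close>; then every horizontal section at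
    height \<open>h\<close> has finitely many zeros as well.\<close>
  obtain z0 where z0: "\<And>F. F \<in> \<F> \<Longrightarrow> F (fst (z0 F), snd (z0 F)) \<noteq> 0"
    using nonzero by (metis prod.collapse)
  have "small (\<Union>F\<in>\<F>. {h. F (fst (z0 F), h) = 0})"
    using assms z0 real_polynomial_function_sections
    by (intro small_UN_finite real_polynomial_function_finite_zeros) blast+
  then obtain h where h: "h > 0" "\<And>F. F \<in> \<F> \<Longrightarrow> F (fst (z0 F), h) \<noteq> 0"
    using small_ex_pos_notin by blast
  have "small (\<Union>F\<in>\<F>. {t. F (t, h) = 0})"
    using assms h real_polynomial_function_sections
    by (intro small_UN_finite real_polynomial_function_finite_zeros) blast+
  then obtain t where "\<And>F. F \<in> \<F> \<Longrightarrow> F (t, h) \<noteq> 0"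
    using small_ex_pos_notin by blast
  with h show ?thesis by (intro exI[of _ "(t, h)"]) simp
qed

section \<open>Concurrent lines\<close>

fun det3 :: "real \<times> real \<times> real \<Rightarrow> real \<times> real \<times> real \<Rightarrow> real \<times> real \<times> real \<Rightarrow> real" where
  "det3 (a1, a2, a3) (b1, b2, b3) (c1, c2, c3) =
     a1 * (b2 * c3 - b3 * c2) - a2 * (b1 * c3 - b3 * c1) + a3 * (b1 * c2 - b2 * c1)"

lemma det3_eq_0_if_concurrent:
  assumes "line_eval l1 p = 0" "line_eval l2 p = 0" "line_eval l3 p = 0"
  shows "det3 l1 l2 l3 = 0"
proof -
  obtain a1 a2 a3 b1 b2 b3 c1 c2 c3 x y
    where "l1 = (a1, a2, a3)" "l2 = (b1, b2, b3)" "l3 = (c1, c2, c3)" "p = (x, y)"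
    by (metis prod.collapse)
  with assms have "a3 = - (a1 * x + a2 * y)" "b3 = - (b1 * x + b2 * y)" "c3 = - (c1 * x + c2 * y)"
    by simp_all
  with \<open>l1 = _\<close> \<open>l2 = _\<close> \<open>l3 = _\<close> show ?thesis by (simp add: algebra_simps)
qed

text \<open>\<open>concurrency_det y0 y1 y2 s1 s2 q z\<close> vanishes when the line through \<open>y0\<close> and \<open>(q, 0)\<close>
  and the lines through \<open>y\<^sub>i\<close> and \<open>(crossing z s\<^sub>i, 0)\<close> meet in a common point.\<close>
definition concurrency_det ::
  "real \<times> real \<Rightarrow> real \<times> real \<Rightarrow> real \<times> real \<Rightarrow> real \<times> real \<Rightarrow> real \<times> real \<Rightarrow> real \<Rightarrow>
   real \<times> real \<Rightarrow> real" where
  "concurrency_det y0 y1 y2 s1 s2 q z =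
     det3 (line_via y0 q 1)
       (line_via y1 (snd z * fst s1 - fst z * snd s1) (snd z - snd s1))
       (line_via y2 (snd z * fst s2 - fst z * snd s2) (snd z - snd s2))"

lemma real_polynomial_function_concurrency_det:
  "real_polynomial_function (concurrency_det y0 y1 y2 s1 s2 q)"
  unfolding concurrency_det_def line_via_def det3.simps
  by (intro real_polynomial_function.intros(2-4) real_polynomial_function_diff
      real_polynomial_function_minus real_polynomial_function_fst real_polynomial_function_snd)

lemma concurrency_det_eq_0:
  assumes "snd z > 0" "snd z' > 0" "snd y0 < 0" "snd y1 < 0" "snd y2 < 0" "snd s1 < 0" "snd s2 < 0"
    and "crossing z' y0 = q" "crossing z' y1 = crossing z s1" "crossing z' y2 = crossing z s2"
  shows "concurrency_det y0 y1 y2 s1 s2 q z = 0"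
proof -
  have "line_eval (line_via y0 q 1) z' = 0"
    using assms crossing_eq_iff[of z' y0 q] by simp
  moreover have "line_eval (line_via y (snd z * fst s - fst z * snd s) (snd z - snd s)) z' = 0"
    if "snd y < 0" "snd s < 0" "crossing z' y = crossing z s" for y s
    using that assms(1,2) crossing_eq_frac_iff[of z' y "snd z - snd s"]
    by (simp add: crossing_def[of z s])
  ultimately show ?thesis
    unfolding concurrency_det_def using assms(4-7,9,10) by (intro det3_eq_0_if_concurrent)
qed

lemma concurrency_det_nonzero:
  assumes "snd y0 < 0" "snd y1 < 0" "snd y2 < 0" "snd s1 < 0" "snd s2 < 0" "y1 \<noteq> y2"
  shows "\<exists>z. concurrency_det y0 y1 y2 s1 s2 q z \<noteq> 0"
proof -
  define g where "g t = snd y1 * (t - fst y2) - snd y2 * (t - fst y1)" for t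
  have axis: "concurrency_det y0 y1 y2 s1 s2 q (t, 0) = snd s1 * snd s2 * snd y0 * (t - q) * g t" for t
    by (simp add: concurrency_det_def line_via_def g_def algebra_simps)
  have "{t. g t = 0} \<subseteq> {(snd y1 * fst y2 - snd y2 * fst y1) / (snd y1 - snd y2)}"
  proof (cases "snd y1 = snd y2")
    case True
    with assms have "fst y1 \<noteq> fst y2" by (simp add: prod_eq_iff)
    with True assms show ?thesis by (auto simp: g_def algebra_simps)
  qed (auto simp: g_def field_simps)
  then have "finite (insert q {t. g t = 0})" using finite_subset by auto
  then obtain t where "t \<notin> insert q {t. g t = 0}"
    using ex_new_if_finite[OF infinite_UNIV_char_0] by blast
  with assms show ?thesis by (intro exI[of _ "(t, 0)"]) (simp add: axis)
qed

section \<open>The extension step\<close>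

definition coincidences :: "(real \<times> real) set \<Rightarrow> real set" where
  "coincidences K = {crossing z y1 | z y1 y2.
     snd z > 0 \<and> y1 \<in> K \<and> y2 \<in> K \<and> y1 \<noteq> y2 \<and> crossing z y1 = crossing z y2}"

lemma finite_coincidences:
  assumes "finite K" "K \<subseteq> lower_half"
  shows "finite (coincidences K)"
proof -
  have "coincidences K \<subseteq>
    (\<lambda>(y1, y2). (fst y1 * snd y2 - fst y2 * snd y1) / (snd y2 - snd y1)) ` (K \<times> K)"
  proof
    fix c assume "c \<in> coincidences K"
    then obtain z y1 y2 where c: "c = crossing z y1" and z: "snd z > 0"
      and y: "y1 \<in> K" "y2 \<in> K" "y1 \<noteq> y2" and eq: "crossing z y1 = crossing z y2"
      unfolding coincidences_def by blast
    from y assms(2) have "snd y1 < 0" "snd y2 < 0" by (auto simp: lower_half_def)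
    with z y eq have "c = (fst y1 * snd y2 - fst y2 * snd y1) / (snd y2 - snd y1)"
      unfolding c by (intro crossing_coincidence)
    with y show "c \<in> (\<lambda>(y1, y2). (fst y1 * snd y2 - fst y2 * snd y1) / (snd y2 - snd y1)) ` (K \<times> K)"
      by (auto intro!: image_eqI[of _ _ "(y1, y2)"])
  qed
  then show ?thesis by (rule finite_subset) (simp add: assms(1))
qed

definition jointly_visible :: "(real \<times> real) set \<Rightarrow> real set \<Rightarrow> bool" where
  "jointly_visible K X \<longleftrightarrow> (\<exists>z. snd z > 0 \<and> (\<forall>y\<in>K. crossing z y \<in> X))"

definition pinned :: "(real \<times> real) set \<Rightarrow> real set \<Rightarrow> (real \<times> real) set" where
  "pinned K X = {z. snd z > 0 \<and>
     (\<exists>y1\<in>K. \<exists>y2\<in>K. crossing z y1 \<in> X \<and> crossing z y2 \<in> X \<and> crossing z y1 \<noteq> crossing z y2)}"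

lemma small_pinned:
  assumes "finite K" "K \<subseteq> lower_half" "small X"
  shows "small (pinned K X)"
proof -
  define g where "g = (\<lambda>(y1, y2, v1, v2). THE z. snd z > 0 \<and> crossing z y1 = v1 \<and> crossing z y2 = v2)"
  have "pinned K X \<subseteq> g ` (K \<times> K \<times> X \<times> X)"
  proof
    fix z assume "z \<in> pinned K X"
    then obtain y1 y2 where z: "snd z > 0" "y1 \<in> K" "y2 \<in> K" "crossing z y1 \<in> X" "crossing z y2 \<in> X"
      "crossing z y1 \<noteq> crossing z y2"
      unfolding pinned_def by blast
    with assms(2) have "snd y1 < 0" "snd y2 < 0" by (auto simp: lower_half_def)
    with z have "g (y1, y2, crossing z y1, crossing z y2) = z"
      unfolding g_def prod.case
    proof (intro the_equality)
      fix w assume "snd w > 0 \<and> crossing w y1 = crossing z y1 \<and> crossing w y2 = crossing z y2"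
      with z \<open>snd y1 < 0\<close> \<open>snd y2 < 0\<close> show "w = z"
        using crossings_determine_viewpoint[of z w y1 y2] by blast
    qed (use z in simp)
    with z show "z \<in> g ` (K \<times> K \<times> X \<times> X)" by force
  qed
  moreover have "small (K \<times> K \<times> X \<times> X)"
    using assms by (simp add: small_Times small_finite)
  ultimately show ?thesis using small_subset small_image by blast
qed

definition forbidden_crossings :: "(real \<times> real) set \<Rightarrow> real set \<Rightarrow> real set" where
  "forbidden_crossings K X = coincidences K \<union> (\<lambda>(y, z). crossing z y) ` (K \<times> pinned K X)"

lemma small_forbidden_crossings:
  assumes "finite K" "K \<subseteq> lower_half" "small X"
  shows "small (forbidden_crossings K X)"
proof -
  have "small (coincidences K)" using assms by (intro small_finite finite_coincidences)
  moreover have "small (K \<times> pinned K X)"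
    using assms by (simp add: small_Times small_finite small_pinned)
  ultimately show ?thesis unfolding forbidden_crossings_def by (intro small_Un small_image)
qed

definition admissible :: "(real \<times> real) set \<Rightarrow> real set \<Rightarrow> bool" where
  "admissible K X \<longleftrightarrow> X \<inter> coincidences K = {} \<and> \<not> jointly_visible K X"

lemma inj_on_crossing:
  assumes "snd z > 0" "crossing z ` K \<inter> coincidences K = {}"
  shows "inj_on (crossing z) K"
proof (rule inj_onI, rule ccontr)
  fix y1 y2 assume "y1 \<in> K" "y2 \<in> K" "crossing z y1 = crossing z y2" "y1 \<noteq> y2"
  with assms(1) have "crossing z y1 \<in> coincidences K" unfolding coincidences_def by blast
  with \<open>y1 \<in> K\<close> assms(2) show False by blast
qed

lemma obtain_singleton_and_two_outside:
  assumes "finite K" "card K \<ge> 3" "A \<subseteq> K" "card (K - A) < card K"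
    and "\<And>a b. a \<in> A \<Longrightarrow> b \<in> A \<Longrightarrow> a = b"
  obtains y0 y1 y2 where "A = {y0}" "y1 \<in> K - A" "y2 \<in> K - A" "y1 \<noteq> y2"
proof -
  have "A \<noteq> {}" using assms(4) by auto
  then obtain y0 where A: "A = {y0}" using assms(5) by blast
  with assms(1-3) have "\<not> card (K - A) \<le> Suc 0" by simp
  then obtain y1 y2 where "y1 \<in> K - A" "y2 \<in> K - A" "y1 \<noteq> y2"
    using card_le_Suc0_iff_eq[of "K - A"] assms(1) by blast
  with A show thesis by (rule that)
qed

definition generic_viewpoint ::
  "(real \<times> real) set \<Rightarrow> (real \<times> real) set \<Rightarrow> real set \<Rightarrow> real \<times> real \<Rightarrow> bool" where
  "generic_viewpoint K S X z \<longleftrightarrow> snd z > 0 \<and> crossing z ` S \<inter> forbidden_crossings K X = {} \<and>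
     \<not> (\<exists>z' y0 y1 y2 s1 s2. snd z' > 0 \<and> y0 \<in> K \<and> y1 \<in> K \<and> y2 \<in> K \<and> y1 \<noteq> y2 \<and>
       s1 \<in> S \<and> s2 \<in> S \<and> crossing z' y0 \<in> X \<and>
       crossing z' y1 = crossing z s1 \<and> crossing z' y2 = crossing z s2)"

lemma admissible_extension_if_generic:
  assumes K: "finite K" "card K \<ge> 3" and S: "finite S" "card S < card K"
    and X: "admissible K X" and z: "generic_viewpoint K S X z"
  shows "admissible K (X \<union> crossing z ` S)"
proof -
  let ?P = "crossing z ` S"
  have fresh: "?P \<inter> forbidden_crossings K X = {}" using z unfolding generic_viewpoint_def by blast
  then have P: "?P \<inter> coincidences K = {}" unfolding forbidden_crossings_def by blast
  have "\<not> jointly_visible K (X \<union> ?P)"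
  proof
    assume "jointly_visible K (X \<union> ?P)"
    then obtain z' where z': "snd z' > 0" "crossing z' ` K \<subseteq> X \<union> ?P"
      unfolding jointly_visible_def by blast
    with X P have "crossing z' ` K \<inter> coincidences K = {}" unfolding admissible_def by blast
    with z'(1) have inj: "inj_on (crossing z') K" by (rule inj_on_crossing)
    define KX where "KX = {y \<in> K. crossing z' y \<in> X}"
    have outside: "crossing z' y \<in> ?P" if "y \<in> K - KX" for y
      using z'(2) that unfolding KX_def by blast
    show False
    proof (cases "\<exists>y1\<in>KX. \<exists>y2\<in>KX. y1 \<noteq> y2")
      case True
      with inj z'(1) have "z' \<in> pinned K X"
        unfolding pinned_def KX_def inj_on_def by blast
      moreover obtain y where "y \<in> K - KX"
        using X z'(1) unfolding admissible_def jointly_visible_def KX_def by blast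
      ultimately have "crossing z' y \<in> forbidden_crossings K X"
        unfolding forbidden_crossings_def by (intro UnI2 image_eqI[of _ _ "(y, z')"]) auto
      with outside[OF \<open>y \<in> K - KX\<close>] fresh show False by blast
    next
      case False
      have "inj_on (crossing z') (K - KX)" using inj by (rule inj_on_subset) blast
      then have "card (K - KX) \<le> card ?P"
        using outside S by (intro card_inj_on_le[of "crossing z'"]) auto
      also have "\<dots> \<le> card S" using S(1) by (rule card_image_le)
      finally have "card (K - KX) < card K" using S by simp
      moreover have "KX \<subseteq> K" unfolding KX_def by blast
      ultimately obtain y0 y1 y2 where "KX = {y0}" "y1 \<in> K - KX" "y2 \<in> K - KX" "y1 \<noteq> y2"
        using False by (elim obtain_singleton_and_two_outside[OF K]) blast+
      moreover from this outside obtain s1 s2 where "s1 \<in> S" "s2 \<in> S"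
        "crossing z' y1 = crossing z s1" "crossing z' y2 = crossing z s2" by blast
      ultimately show False using z z'(1) unfolding generic_viewpoint_def KX_def by blast
    qed
  qed
  with X P show ?thesis unfolding admissible_def by blast
qed

definition genericity_conditions ::
  "(real \<times> real) set \<Rightarrow> (real \<times> real) set \<Rightarrow> real set \<Rightarrow> (real \<times> real \<Rightarrow> real) set" where
  "genericity_conditions K S X =
     {concurrency_det y0 y1 y2 s1 s2 q | y0 y1 y2 s1 s2 q.
        y0 \<in> K \<and> y1 \<in> K \<and> y2 \<in> K \<and> s1 \<in> S \<and> s2 \<in> S \<and> q \<in> X \<and> y1 \<noteq> y2}
   \<union> {line_eval (line_via s w 1) | s w. s \<in> S \<and> w \<in> forbidden_crossings K X}"

lemma small_genericity_conditions:
  assumes "finite K" "K \<subseteq> lower_half" "finite S" "small X"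
  shows "small (genericity_conditions K S X)"
proof -
  let ?f = "\<lambda>(y0, y1, y2, s1, s2, q). concurrency_det y0 y1 y2 s1 s2 q"
  have "genericity_conditions K S X \<subseteq> ?f ` (K \<times> K \<times> K \<times> S \<times> S \<times> X)
      \<union> (\<lambda>(s, w). line_eval (line_via s w 1)) ` (S \<times> forbidden_crossings K X)"
  proof
    fix F assume "F \<in> genericity_conditions K S X"
    then consider y0 y1 y2 s1 s2 q where "F = concurrency_det y0 y1 y2 s1 s2 q"
        "(y0, y1, y2, s1, s2, q) \<in> K \<times> K \<times> K \<times> S \<times> S \<times> X"
      | s w where "F = line_eval (line_via s w 1)" "(s, w) \<in> S \<times> forbidden_crossings K X"
      unfolding genericity_conditions_def by blast
    then show "F \<in> ?f ` (K \<times> K \<times> K \<times> S \<times> S \<times> X)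
      \<union> (\<lambda>(s, w). line_eval (line_via s w 1)) ` (S \<times> forbidden_crossings K X)"
    proof cases
      case 1
      then show ?thesis by (intro UnI1 rev_image_eqI[OF 1(2)]) simp
    next
      case 2
      then show ?thesis by (intro UnI2 rev_image_eqI[OF 2(2)]) simp
    qed
  qed
  moreover have "small (K \<times> K \<times> K \<times> S \<times> S \<times> X)" "small (S \<times> forbidden_crossings K X)"
    using assms by (simp_all add: small_Times small_finite small_forbidden_crossings)
  ultimately show ?thesis by (meson small_Un small_image small_subset)
qed

lemma genericity_conditions_polynomial_nonzero:
  assumes "K \<subseteq> lower_half" "S \<subseteq> lower_half" "F \<in> genericity_conditions K S X"
  shows "real_polynomial_function F" "\<exists>z. F z \<noteq> 0"
proof -
  have lower: "snd y < 0" if "y \<in> K \<union> S" for y using that assms by (auto simp: lower_half_def)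
  from assms(3) consider y0 y1 y2 s1 s2 q where "F = concurrency_det y0 y1 y2 s1 s2 q"
      "y0 \<in> K" "y1 \<in> K" "y2 \<in> K" "s1 \<in> S" "s2 \<in> S" "y1 \<noteq> y2"
    | s w where "F = line_eval (line_via s w 1)" "s \<in> S"
    unfolding genericity_conditions_def by blast
  then have "real_polynomial_function F \<and> (\<exists>z. F z \<noteq> 0)"
  proof cases
    case 1
    then show ?thesis
      using real_polynomial_function_concurrency_det concurrency_det_nonzero[of y0 y1 y2 s1 s2 q] lower
      by simp
  next
    case 2
    have "line_eval (line_via s w 1) (w + 1, 0) \<noteq> 0"
      using lower[of s] \<open>s \<in> S\<close> by (simp add: line_via_def algebra_simps)
    with 2 show ?thesis using real_polynomial_function_line_eval by blast
  qed
  then show "real_polynomial_function F" "\<exists>z. F z \<noteq> 0" by simp_all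
qed

lemma generic_viewpoint_if_nonzero:
  assumes "K \<subseteq> lower_half" "S \<subseteq> lower_half" "snd z > 0"
    and nonzero: "\<And>F. F \<in> genericity_conditions K S X \<Longrightarrow> F z \<noteq> 0"
  shows "generic_viewpoint K S X z"
proof -
  have lower: "snd y < 0" if "y \<in> K \<union> S" for y using that assms by (auto simp: lower_half_def)
  have "crossing z s \<notin> forbidden_crossings K X" if "s \<in> S" for s
  proof
    assume "crossing z s \<in> forbidden_crossings K X"
    then have "line_eval (line_via s (crossing z s) 1) \<in> genericity_conditions K S X"
      using that unfolding genericity_conditions_def by blast
    moreover have "line_eval (line_via s (crossing z s) 1) z = 0"
      using assms(3) lower[of s] that crossing_eq_iff[of z s "crossing z s"] by simp
    ultimately show False using nonzero by blast
  qed
  moreover have False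
    if "snd z' > 0" "y0 \<in> K" "y1 \<in> K" "y2 \<in> K" "y1 \<noteq> y2" "s1 \<in> S" "s2 \<in> S"
      "crossing z' y0 \<in> X" "crossing z' y1 = crossing z s1" "crossing z' y2 = crossing z s2"
    for z' y0 y1 y2 s1 s2
  proof -
    have "concurrency_det y0 y1 y2 s1 s2 (crossing z' y0) \<in> genericity_conditions K S X"
      using that unfolding genericity_conditions_def by blast
    moreover from that assms(3) lower have "concurrency_det y0 y1 y2 s1 s2 (crossing z' y0) z = 0"
      by (intro concurrency_det_eq_0) auto
    ultimately show False using nonzero by blast
  qed
  ultimately show ?thesis using assms(3) unfolding generic_viewpoint_def by blast
qed

lemma admissible_extension:
  assumes K: "finite K" "K \<subseteq> lower_half" "card K \<ge> 3"
    and S: "finite S" "S \<subseteq> lower_half" "card S < card K"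
    and X: "small X" "admissible K X"
  shows "\<exists>z. snd z > 0 \<and> admissible K (X \<union> crossing z ` S)"
proof -
  obtain z where "snd z > 0" "\<And>F. F \<in> genericity_conditions K S X \<Longrightarrow> F z \<noteq> 0"
    using ex_upper_common_nonzero[OF small_genericity_conditions[OF K(1,2) S(1) X(1)]]
      genericity_conditions_polynomial_nonzero[OF K(2) S(2)] by metis
  with K(2) S(2) have "generic_viewpoint K S X z" by (rule generic_viewpoint_if_nonzero)
  with K(1,3) S(1,3) X(2) \<open>snd z > 0\<close> show ?thesis
    using admissible_extension_if_generic by blast
qed

section \<open>Transfinite construction\<close>

lemma admissible_Union_chain:
  assumes "finite K" "K \<noteq> {}" "subset.chain UNIV \<C>" "\<And>X. X \<in> \<C> \<Longrightarrow> admissible K X"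
  shows "admissible K (\<Union>\<C>)"
proof -
  have "\<not> jointly_visible K (\<Union>\<C>)"
  proof
    assume "jointly_visible K (\<Union>\<C>)"
    then obtain z where z: "snd z > 0" "crossing z ` K \<subseteq> \<Union>\<C>"
      unfolding jointly_visible_def by blast
    moreover from z(2) assms(2) have "\<C> \<noteq> {}" by auto
    ultimately obtain X where "X \<in> \<C>" "crossing z ` K \<subseteq> X"
      using finite_subset_Union_chain[OF finite_imageI[OF assms(1)] _ _ assms(3)] by blast
    with z(1) assms(4) show False unfolding admissible_def jointly_visible_def by blast
  qed
  with assms(4) show ?thesis unfolding admissible_def by blast
qed

lemma transfinite_chain_construction:
  fixes r :: "'i rel" and G :: "'i \<Rightarrow> 'z \<Rightarrow> 'a set"
  assumes wo: "Well_order r" "Field r = UNIV"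
    and chain: "\<And>\<C>. subset.chain UNIV \<C> \<Longrightarrow> (\<And>X. X \<in> \<C> \<Longrightarrow> P X) \<Longrightarrow> P (\<Union>\<C>)"
    and step: "\<And>i f. P (\<Union>j\<in>underS r i. G j (f j)) \<Longrightarrow>
      \<exists>z. Z z \<and> P ((\<Union>j\<in>underS r i. G j (f j)) \<union> G i z)"
  shows "\<exists>f. \<forall>i. Z (f i) \<and> P (\<Union>j\<in>under r i. G j (f j))"
proof -
  have WO: "wo_rel r" using wo(1) by (simp add: wo_rel_def)
  define H where "H f i = (SOME z. Z z \<and> P ((\<Union>j\<in>underS r i. G j (f j)) \<union> G i z))" for f i
  define f where "f = wo_rel.worec r H"
  have "wo_rel.adm_wo r H"
    unfolding wo_rel.adm_wo_def[OF WO]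
  proof (intro allI impI)
    fix g1 g2 :: "'i \<Rightarrow> 'z" and i assume "\<forall>j\<in>underS r i. g1 j = g2 j"
    then have "(\<Union>j\<in>underS r i. G j (g1 j)) = (\<Union>j\<in>underS r i. G j (g2 j))" by simp
    then show "H g1 i = H g2 i" unfolding H_def by simp
  qed
  then have "f = H f" unfolding f_def by (rule wo_rel.worec_fixpoint[OF WO])
  define U where "U i = (\<Union>j\<in>under r i. G j (f j))" for i
  have under_eq: "under r i = insert i (underS r i)" for i
    using Refl_under_underS[OF wo_rel.REFL[OF WO]] wo(2) by auto
  have down: "under r j \<subseteq> underS r i" if "j \<in> underS r i" for i j
    using that wo_rel.underS_ofilter[OF WO] unfolding wo_rel.ofilter_def[OF WO] by blast
  have mono: "U j \<subseteq> U k" if "(j, k) \<in> r" for j k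
    unfolding U_def using under_incr[OF wo_rel.TRANS[OF WO] that] by (rule UN_mono) simp
  have "Z (f i) \<and> P (U i)" for i
  proof (induction i rule: wo_rel.well_order_induct[OF WO])
    case (1 i)
    have "\<Union>(U ` underS r i) = (\<Union>j\<in>underS r i. G j (f j))"
    proof
      show "\<Union>(U ` underS r i) \<subseteq> (\<Union>j\<in>underS r i. G j (f j))"
        unfolding U_def using down by (intro UN_least UN_mono) auto
      show "(\<Union>j\<in>underS r i. G j (f j)) \<subseteq> \<Union>(U ` underS r i)"
        unfolding U_def under_eq by blast
    qed
    moreover have "P (\<Union>(U ` underS r i))"
    proof (rule chain)
      show "subset.chain UNIV (U ` underS r i)"
        unfolding subset.chain_def using wo_rel.TOTALS[OF WO] wo(2) mono by blast
      show "\<And>X. X \<in> U ` underS r i \<Longrightarrow> P X" using "1" unfolding underS_def by blast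
    qed
    ultimately have "P (\<Union>j\<in>underS r i. G j (f j))" by simp
    then have "\<exists>z. Z z \<and> P ((\<Union>j\<in>underS r i. G j (f j)) \<union> G i z)" by (rule step)
    then have "Z (f i) \<and> P ((\<Union>j\<in>underS r i. G j (f j)) \<union> G i (f i))"
      using \<open>f = H f\<close> unfolding H_def by (metis (mono_tags, lifting) someI_ex)
    then show ?case unfolding U_def under_eq by (simp add: Un_commute)
  qed
  then show ?thesis unfolding U_def by blast
qed

lemma card_of_UN_insert_finite:
  assumes "\<And>j. finite (F j)"
  shows "|\<Union>j\<in>insert i J. F j| \<le>o |J| \<or> |\<Union>j\<in>insert i J. F j| \<le>o |UNIV :: nat set|"
proof (cases "finite J")
  case True
  then have "finite (\<Union>j\<in>insert i J. F j)" using assms by simp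
  then show ?thesis
    by (simp add: ordLess_imp_ordLeq card_of_finite_ordLess_infinite)
next
  case False
  have "|{i}| \<le>o |J|" using False by (intro card_of_singl_ordLeq) auto
  then have "|{i} \<union> J| \<le>o |J|"
    using False by (intro card_of_Un_ordLeq_infinite_Field)
      (simp_all add: Field_card_of card_of_card_order_on ordIso_imp_ordLeq[OF card_of_refl])
  then have "|insert i J| \<le>o |J|" by simp
  moreover have "\<forall>j\<in>insert i J. |F j| \<le>o |J|"
    using False assms by (simp add: ordLess_imp_ordLeq card_of_finite_ordLess_infinite)
  ultimately show ?thesis using card_of_UNION_ordLeq_infinite[OF False] by blast
qed

lemma small_underS:
  assumes "card_order r" "(card_of (UNIV :: 'i set), card_of (UNIV :: real set)) \<in> ordIso"
  shows "small (underS r (i :: 'i))"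
proof -
  have "Card_order r" "Field r = UNIV" using card_order_on_Card_order[of UNIV r] assms(1) by auto
  then have "|underS r i| <o r" by (simp add: card_of_underS)
  also have "(r, card_of (UNIV :: 'i set)) \<in> ordIso"
    using card_of_Field_ordIso[OF \<open>Card_order r\<close>] \<open>Field r = UNIV\<close> ordIso_symmetric by simp
  finally show ?thesis unfolding small_def using assms(2) ordLess_ordIso_trans by blast
qed

lemma ex_admissible_chain:
  fixes r :: "'o rel" and a :: "'o \<Rightarrow> (real \<times> real) set"
  assumes K: "finite K" "K \<subseteq> lower_half" "card K \<ge> 3"
    and r: "card_order r" "(card_of (UNIV :: 'o set), card_of (UNIV :: real set)) \<in> ordIso"
    and a: "\<And>l. finite (a l)" "\<And>l. a l \<subseteq> lower_half" "\<And>l. card (a l) < card K"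
  obtains X :: "'o \<Rightarrow> real set" and z :: "'o \<Rightarrow> real \<times> real"
  where "\<And>l1 l2. (l1, l2) \<in> r \<Longrightarrow> X l1 \<subseteq> X l2"
    and "\<And>l. admissible K (X l)" and "\<And>l. snd (z l) > 0" and "\<And>l. crossing (z l) ` a l \<subseteq> X l"
    and "\<And>l. |X l| \<le>o |underS r l| \<or> |X l| \<le>o |UNIV :: nat set|"
proof -
  have wo: "Well_order r" "Field r = UNIV"
    using r(1) card_order_on_Card_order[of UNIV r] by (auto simp: card_order_on_def)
  have "K \<noteq> {}" using K(3) by auto
  have "\<exists>z. \<forall>l. snd (z l) > 0 \<and> admissible K (\<Union>m\<in>under r l. crossing (z m) ` a m)"
  proof (rule transfinite_chain_construction[OF wo])
    fix l f assume "admissible K (\<Union>m\<in>underS r l. crossing (f m) ` a m)"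
    moreover have "small (\<Union>m\<in>underS r l. crossing (f m) ` a m)"
      using a(1) small_underS[OF r] by (intro small_UN_finite) auto
    ultimately show "\<exists>z. snd z > 0 \<and>
        admissible K ((\<Union>m\<in>underS r l. crossing (f m) ` a m) \<union> crossing z ` a l)"
      using admissible_extension[OF K a(1,2,3)] by blast
  qed (use admissible_Union_chain[OF K(1) \<open>K \<noteq> {}\<close>] in blast)
  then obtain z where z: "\<And>l. snd (z l) > 0"
    and admissible: "\<And>l. admissible K (\<Union>m\<in>under r l. crossing (z m) ` a m)"
    by blast
  have under_eq: "under r l = insert l (underS r l)" for l
    using Refl_under_underS[of r l] wo by (auto simp: order_on_defs)
  show thesis
  proof (rule that[OF _ admissible z])
    show "(\<Union>m\<in>under r l1. crossing (z m) ` a m) \<subseteq> (\<Union>m\<in>under r l2. crossing (z m) ` a m)"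
      if "(l1, l2) \<in> r" for l1 l2
      using under_incr[of r l1 l2] that wo by (auto simp: order_on_defs)
    show "crossing (z l) ` a l \<subseteq> (\<Union>m\<in>under r l. crossing (z m) ` a m)" for l
      unfolding under_eq by blast
    show "|\<Union>m\<in>under r l. crossing (z m) ` a m| \<le>o |underS r l| \<or>
        |\<Union>m\<in>under r l. crossing (z m) ` a m| \<le>o |UNIV :: nat set|" for l
      unfolding under_eq by (rule card_of_UN_insert_finite) (simp add: a(1))
  qed
qed

theorem proposition2p3:
  fixes k :: nat
    and K :: "(real \<times> real) set"
    and r :: "'o rel"
    and a :: "'o \<Rightarrow> (real \<times> real) set"
  assumes k2: "k \<ge> 2"
    and K_sub: "K \<subseteq> lower_half" and K_fin: "finite K" and K_card: "card K = k + 1"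
    and r_initial: "card_order r"
    and r_card: "(card_of (UNIV :: 'o set), card_of (UNIV :: real set)) \<in> ordIso"
    and a_bij: "bij_betw a UNIV {S. S \<subseteq> lower_half \<and> finite S \<and> card S = k}"
  shows "\<exists>A B :: 'o \<Rightarrow> (real \<times> real) set.
     (\<forall>l1 l2. (l1, l2) \<in> r \<and> l1 \<noteq> l2 \<longrightarrow> A l1 \<subseteq> A l2 \<and> B l1 \<subseteq> B l2) \<and>
     (\<forall>l. A l \<subseteq> x_axis \<and> B l \<subseteq> x_axis
        \<and> A l \<inter> B l = {}
        \<and> ((card_of (A l), card_of (underS r l)) \<in> ordLeq
            \<or> (card_of (A l), card_of (UNIV :: nat set)) \<in> ordLeq)
        \<and> ((card_of (B l), card_of (underS r l)) \<in> ordLeq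
            \<or> (card_of (B l), card_of (UNIV :: nat set)) \<in> ordLeq)
        \<and> (card_of (A l), card_of (UNIV :: real set)) \<in> ordLess
        \<and> (card_of (B l), card_of (UNIV :: real set)) \<in> ordLess
        \<and> (\<exists>z\<in>upper_half. \<forall>y\<in>a l. sees_via z y (A l))
        \<and> \<not> (\<exists>z\<in>upper_half. \<forall>y\<in>K. sees_via z y (A l)))"
proof -
  have "finite (a l)" "a l \<subseteq> lower_half" "card (a l) < card K" for l
    using a_bij K_card unfolding bij_betw_def by auto
  moreover have "card K \<ge> 3" using K_card k2 by simp
  ultimately obtain X z where X_mono: "\<And>l1 l2. (l1, l2) \<in> r \<Longrightarrow> X l1 \<subseteq> X l2"
    and admissible: "\<And>l. admissible K (X l)"
    and z: "\<And>l. snd (z l) > 0" "\<And>l. crossing (z l) ` a l \<subseteq> X l"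
    and X_card: "\<And>l. |X l| \<le>o |underS r l| \<or> |X l| \<le>o |UNIV :: nat set|"
    using ex_admissible_chain[OF K_fin K_sub _ r_initial r_card] by metis
  define A where "A l = (\<lambda>x. (x, 0 :: real)) ` X l" for l
  have A_card: "|A l| \<le>o |underS r l| \<or> |A l| \<le>o |UNIV :: nat set|" for l
    using X_card[of l] card_of_image[of "\<lambda>x. (x, 0 :: real)" "X l"]
    unfolding A_def by (meson ordLeq_transitive)
  have "small (A l)" for l
    using A_card[of l] small_ordLeq small_underS[OF r_initial r_card] small_countable by blast
  moreover have "\<exists>w\<in>upper_half. \<forall>y\<in>a l. sees_via w y (A l)" for l
    using z sees_via_axis_image_iff[OF z(1) \<open>a l \<subseteq> lower_half\<close>] unfolding A_def upper_half_def by blast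
  moreover have "\<not> (\<exists>w\<in>upper_half. \<forall>y\<in>K. sees_via w y (A l))" for l
    using admissible[of l] sees_via_axis_image_iff[OF _ K_sub]
    unfolding A_def admissible_def jointly_visible_def upper_half_def by blast
  moreover have "A l \<subseteq> x_axis" for l unfolding A_def x_axis_def by auto
  moreover have "A l1 \<subseteq> A l2" if "(l1, l2) \<in> r" for l1 l2
    unfolding A_def using X_mono[OF that] by (rule image_mono)
  \<comment> \<open>nothing constrains \<open>B\<close> beyond disjointness from \<open>A\<close>, so the empty family serves\<close>
  ultimately show ?thesis
    using A_card by (intro exI[of _ A] exI[of _ "\<lambda>_. {}"])
      (auto simp: card_of_empty small_def[symmetric] small_finite)
qed

end
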